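(* Let $\tau>0$, $a\ge2$, let $s,d$ be integers with $1\le s\le d$ and let $\ell\in\mathcal L$. Then $$\inf_{\hat T}\sup_{P_\xi\in\mathcal P_{a,\tau}}\sup_{\sigma>0}\sup_{\theta\in\Theta_s}\mathbf E_{\theta,P_\xi,\sigma}\,\ell\Big(c\,\phi_{\rm pol}(s,d)^{-1}\Big|\frac{\hat T}{\sigma^2}-1\Big|\Big)\ge c',$$ where $\phi_{\rm pol}(s,d)=\max\big(\frac1{\sqrt d},(\frac sd)^{1-\frac2a}\big)$ and $c,c'>0$ depend only on $\ell$, $a$ and $\tau$.
   Context: Model: $Y_i=\theta_i+\sigma\xi_i$, $i=1,\dots,d$, $\theta\in\mathbb R^d$, $\sigma>0$, $\xi_i$ i.i.d. with distribution $P_\xi$; $\mathbf E_{\theta,P_\xi,\sigma}$ expectation; $\Theta_s=\{\theta:\|\theta\|_0\le s\}$. For $\tau>0,a\ge2$, $\mathcal P_{a,\tau}$: distributions with $\mathbf E\xi_1=0,\mathbf E\xi_1^2=1$, $\mathbf P(|\xi_1|>t)\le(\tau/t)^a$ for all $t\ge2$. $\mathcal L$: nondecreasing $\ell:[0,\infty)\to[0,\infty)$, $\ell(0)=0$, $\ell\not\equiv0$; $\inf_{\hat T}$ over all estimators. *)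

theory Defs
  imports "HOL-Probability.Probability"
begin

definition noise_class :: "real \<Rightarrow> real \<Rightarrow> real measure set" where
  "noise_class a \<tau> = {P. prob_space P \<and> sets P = sets borel
      \<and> integrable P (\<lambda>x. x) \<and> (\<integral>x. x \<partial>P) = 0
      \<and> integrable P (\<lambda>x. x\<^sup>2) \<and> (\<integral>x. x\<^sup>2 \<partial>P) = 1
      \<and> (\<forall>t\<ge>2. measure P {x. \<bar>x\<bar> > t} \<le> (\<tau> / t) powr a)}"

text \<open>Loss functions: nondecreasing on [0,oo), vanishing at 0, not identically 0
(only values on [0,oo) matter).\<close>
definition loss_class :: "(real \<Rightarrow> real) set" where
  "loss_class = {L. mono_on {0..} L \<and> (\<forall>x\<ge>0. L x \<ge> 0) \<and> L 0 = 0
      \<and> (\<exists>x\<ge>0. L x \<noteq> 0)}"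

text \<open>s-sparse parameter vectors in R^d, with R^d represented by functions on {..<d}.\<close>
definition Theta :: "nat \<Rightarrow> nat \<Rightarrow> (nat \<Rightarrow> real) set" where
  "Theta d s = {\<theta>. \<theta> \<in> extensional {..<d} \<and> card {i\<in>{..<d}. \<theta> i \<noteq> 0} \<le> s}"

definition estimators :: "nat \<Rightarrow> ((nat \<Rightarrow> real) \<Rightarrow> real) set" where
  "estimators d = borel_measurable (PiM {..<d} (\<lambda>_. borel))"

definition phi_pol :: "real \<Rightarrow> nat \<Rightarrow> nat \<Rightarrow> real" where
  "phi_pol a s d = max (1 / sqrt (real d)) ((real s / real d) powr (1 - 2 / a))"

definition obs :: "nat \<Rightarrow> (nat \<Rightarrow> real) \<Rightarrow> real \<Rightarrow> (nat \<Rightarrow> real) \<Rightarrow> (nat \<Rightarrow> real)" where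
  "obs d \<theta> \<sigma> \<xi> = restrict (\<lambda>i. \<theta> i + \<sigma> * \<xi> i) {..<d}"

definition risk :: "(real \<Rightarrow> real) \<Rightarrow> real \<Rightarrow> nat \<Rightarrow> ((nat \<Rightarrow> real) \<Rightarrow> real)
    \<Rightarrow> real measure \<Rightarrow> real \<Rightarrow> (nat \<Rightarrow> real) \<Rightarrow> real \<Rightarrow> ennreal" where
  "risk L c d T P \<sigma> \<theta> \<phi> =
     (\<integral>\<^sup>+ \<xi>. ennreal (L (c / \<phi> * \<bar>T (obs d \<theta> \<sigma> \<xi>) / \<sigma>\<^sup>2 - 1\<bar>)) \<partial>(PiM {..<d} (\<lambda>_. P)))"

end

theory Submission
  imports Defs "HOL-Probability.Hoeffding"
begin

text \<open>
  A two-point (Le Cam) argument. Since the loss is monotone and not identically zero, no value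
  of the estimator can be relatively close to two variances \<open>\<sigma>\<^sub>1\<^sup>2 < \<sigma>\<^sub>2\<^sup>2\<close> at once, so it suffices to
  exhibit two configurations in the model whose variances differ by a relative amount of order
  \<open>\<phi>\<close> while the laws of the observations overlap substantially.

  Dense regime \<open>\<phi> = d\<^sup>-\<^sup>1\<^sup>/\<^sup>2\<close>: with \<open>\<theta> = 0\<close> and three-point noise, the observations are i.i.d.\ with
  values \<open>\<plusminus>1\<close> (each with probability \<open>p/2\<close>) and \<open>0\<close>, and the variance is \<open>p\<close>. For \<open>p = 1/2\<close> and
  \<open>p = 1/2 - 1/(4\<surd>d)\<close> the likelihood ratio is at least \<open>3/8\<close> on the event that at most
  \<open>(d + \<surd>d)/2\<close> coordinates are nonzero, which has probability at least \<open>1/3\<close> by Hoeffding.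

  Sparse regime \<open>\<phi> = (s/d)\<^sup>1\<^sup>-\<^sup>2\<^sup>/\<^sup>a\<close>: a random \<open>\<theta>\<close> with spikes \<open>\<plusminus>H\<close> at rate \<open>q = s/(2d)\<close> observed in noise of
  variance \<open>1/2\<close> produces exactly the same observations as \<open>\<theta> = 0\<close> with noise of variance
  \<open>1/2 + qH\<^sup>2\<close> whose spikes are charged to the noise. The tail condition allows spikes up to
  \<open>H \<asymp> q\<^sup>-\<^sup>1\<^sup>/\<^sup>a\<close>, giving the relative gap \<open>qH\<^sup>2 \<asymp> (s/d)\<^sup>1\<^sup>-\<^sup>2\<^sup>/\<^sup>a\<close>, and by Markov's inequality the random
  \<open>\<theta>\<close> is \<open>s\<close>-sparse with probability at least \<open>1/2\<close>.
\<close>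

lemma expectation_bind_pmf:
  fixes f :: "'b \<Rightarrow> real"
  assumes "finite (set_pmf M)" "\<And>x. x \<in> set_pmf M \<Longrightarrow> finite (set_pmf (N x))"
  shows "measure_pmf.expectation (bind_pmf M N) f =
    measure_pmf.expectation M (\<lambda>x. measure_pmf.expectation (N x) f)"
proof -
  have "measure_pmf.expectation (bind_pmf M N) f =
      (\<Sum>x\<in>set_pmf M. pmf M x *\<^sub>R measure_pmf.expectation (N x) f)"
    by (rule pmf_expectation_bind) (use assms in auto)
  also have "\<dots> = measure_pmf.expectation M (\<lambda>x. measure_pmf.expectation (N x) f)"
    by (rule integral_measure_pmf[symmetric]) (use assms in auto)
  finally show ?thesis .
qed

lemma Pi_pmf_map_dependent:
  assumes "finite A"
  shows "Pi_pmf A d (\<lambda>i. map_pmf (g i) p) =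
    map_pmf (\<lambda>f i. if i \<in> A then g i (f i) else d) (Pi_pmf A d' (\<lambda>_. p))"
proof -
  have "Pi_pmf A d (\<lambda>i. map_pmf (g i) p) = Pi_pmf A d (\<lambda>i. bind_pmf p (\<lambda>x. return_pmf (g i x)))"
    by (simp add: map_pmf_def)
  also have "\<dots> = bind_pmf (Pi_pmf A d' (\<lambda>_. p)) (\<lambda>f. Pi_pmf A d (\<lambda>i. return_pmf (g i (f i))))"
    by (rule Pi_pmf_bind[OF assms])
  also have "\<dots> = map_pmf (\<lambda>f i. if i \<in> A then g i (f i) else d) (Pi_pmf A d' (\<lambda>_. p))"
    using assms by (simp add: map_pmf_def)
  finally show ?thesis .
qed

lemma nn_integral_indicator_le_by_density:
  assumes c: "0 \<le> c" and dens: "\<And>y. y \<in> A \<Longrightarrow> c * pmf p y \<le> pmf q y"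
  shows "(\<integral>\<^sup>+ y. ennreal c * f y * indicator A y \<partial>p) \<le> (\<integral>\<^sup>+ y. f y \<partial>q)"
  unfolding nn_integral_measure_pmf
proof (intro nn_integral_mono)
  fix y
  show "ennreal (pmf p y) * (ennreal c * f y * indicator A y) \<le> ennreal (pmf q y) * f y"
  proof (cases "y \<in> A")
    case True
    then have "ennreal (pmf p y) * ennreal c \<le> ennreal (pmf q y)"
      using dens c by (simp add: mult.commute flip: ennreal_mult)
    then show ?thesis
      using True by (simp add: mult.assoc mult_right_mono flip: mult.assoc)
  qed simp
qed

lemma nn_integral_indicator_le_by_bound:
  assumes "\<And>x. x \<in> set_pmf M \<Longrightarrow> x \<in> K \<Longrightarrow> f x \<le> S"
  shows "(\<integral>\<^sup>+ x. f x * indicator K x \<partial>M) \<le> S"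
proof -
  have "(\<integral>\<^sup>+ x. f x * indicator K x \<partial>M) \<le> (\<integral>\<^sup>+ x. S * indicator K x \<partial>M)"
    using assms by (intro nn_integral_mono_AE AE_pmfI) (auto simp: indicator_def)
  also have "\<dots> = S * emeasure M K"
    by (simp add: nn_integral_cmult_indicator)
  also have "\<dots> \<le> S"
    using mult_left_mono[OF measure_pmf.emeasure_le_1, of S M K] by simp
  finally show ?thesis .
qed

lemma two_point_lower_bound:
  fixes F1 F2 :: "'a \<Rightarrow> ennreal"
  assumes sep: "\<And>y. y \<in> G \<Longrightarrow> ennreal v \<le> F1 y + F2 y"
    and G: "G \<in> sets M" "ennreal m \<le> emeasure M G"
    and F: "F1 \<in> borel_measurable M" "F2 \<in> borel_measurable M"
    and S1: "(\<integral>\<^sup>+ y. F1 y * indicator G y \<partial>M) \<le> S"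
    and S2: "(\<integral>\<^sup>+ y. F2 y * indicator G y \<partial>M) \<le> S"
    and nonneg: "0 \<le> v" "0 \<le> m"
  shows "ennreal (v * m / 2) \<le> S"
proof -
  have "ennreal (v * m / 2) + ennreal (v * m / 2) = ennreal v * ennreal m"
    using nonneg by (simp flip: ennreal_plus ennreal_mult)
  also have "\<dots> \<le> ennreal v * emeasure M G"
    using G(2) by (rule mult_left_mono) simp
  also have "\<dots> = (\<integral>\<^sup>+ y. ennreal v * indicator G y \<partial>M)"
    using G(1) by (simp add: nn_integral_cmult_indicator)
  also have "\<dots> \<le> (\<integral>\<^sup>+ y. F1 y * indicator G y + F2 y * indicator G y \<partial>M)"
    using sep by (intro nn_integral_mono) (auto simp: indicator_def)
  also have "\<dots> = (\<integral>\<^sup>+ y. F1 y * indicator G y \<partial>M) + (\<integral>\<^sup>+ y. F2 y * indicator G y \<partial>M)"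
    using F G(1) by (intro nn_integral_add) auto
  also have "\<dots> \<le> S + S"
    using S1 S2 by (rule add_mono)
  finally show ?thesis
    by (meson add_strict_mono linorder_not_less)
qed

lemma relative_gap_le_max:
  fixes s1 s2 t :: real
  assumes "0 < s1" "s1 < s2"
  shows "(s2 - s1) / (2 * s2) \<le> max \<bar>t / s1 - 1\<bar> \<bar>t / s2 - 1\<bar>"
proof (cases "t \<le> (s1 + s2) / 2")
  case True
  have "t / s2 \<le> (s1 + s2) / 2 / s2"
    using True assms by (intro divide_right_mono) auto
  moreover have "(s2 - s1) / (2 * s2) = 1 - (s1 + s2) / 2 / s2"
    using assms by (simp add: field_simps)
  ultimately show ?thesis by linarith
next
  case False
  have "(s2 - s1) / (2 * s2) \<le> (s2 - s1) / (2 * s1)"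
    using assms by (intro divide_left_mono) auto
  moreover have "(s2 - s1) / (2 * s1) = (s1 + s2) / 2 / s1 - 1"
    using assms by (simp add: field_simps)
  moreover have "(s1 + s2) / 2 / s1 \<le> t / s1"
    using False assms by (intro divide_right_mono) auto
  ultimately show ?thesis by linarith
qed

lemma loss_class_separates_scales:
  assumes L: "L \<in> loss_class" and s: "0 < s1" "s1 < s2" and k: "0 \<le> k"
    and x0: "0 \<le> x0" "x0 \<le> k * ((s2 - s1) / (2 * s2))"
  shows "ennreal (L x0) \<le> ennreal (L (k * \<bar>t / s1 - 1\<bar>)) + ennreal (L (k * \<bar>t / s2 - 1\<bar>))"
proof -
  have mono: "mono_on {0..} L" and nonneg: "\<And>x. 0 \<le> x \<Longrightarrow> 0 \<le> L x"
    using L by (auto simp: loss_class_def)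
  define e1 e2 where "e1 = k * \<bar>t / s1 - 1\<bar>" and "e2 = k * \<bar>t / s2 - 1\<bar>"
  have e: "0 \<le> e1" "0 \<le> e2" using k by (simp_all add: e1_def e2_def)
  have "x0 \<le> k * max \<bar>t / s1 - 1\<bar> \<bar>t / s2 - 1\<bar>"
    using x0(2) relative_gap_le_max[OF s, of t] k by (meson mult_left_mono order_trans)
  also have "\<dots> = max e1 e2"
    using k by (simp add: e1_def e2_def max_mult_distrib_left)
  finally have "L x0 \<le> L (max e1 e2)"
    using x0(1) e by (intro mono_onD[OF mono]) auto
  also have "\<dots> \<le> L e1 + L e2"
    using nonneg e by (cases "e1 \<le> e2") (auto simp: max_def)
  finally show ?thesis
    using nonneg e by (simp add: e1_def e2_def flip: ennreal_plus)
qed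

section \<open>Three-point distributions\<close>

definition spike_pmf :: "real \<Rightarrow> real \<Rightarrow> real pmf" where
  "spike_pmf p v = do {
     b \<leftarrow> bernoulli_pmf p;
     if b then map_pmf (\<lambda>e. if e then v else -v) (bernoulli_pmf (1/2)) else return_pmf 0}"

lemma set_pmf_spike_pmf: "set_pmf (spike_pmf p v) \<subseteq> {v, -v, 0}"
  unfolding spike_pmf_def by (auto split: if_splits)

lemma finite_set_pmf_spike_pmf: "finite (set_pmf (spike_pmf p v))"
  using set_pmf_spike_pmf finite_subset by blast

lemma expectation_spike_pmf:
  fixes f :: "real \<Rightarrow> real"
  assumes "0 \<le> p" "p \<le> 1"
  shows "measure_pmf.expectation (spike_pmf p v) f = p * (f v + f (-v)) / 2 + (1 - p) * f 0"
proof -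
  have "measure_pmf.expectation (spike_pmf p v) f =
     (\<Sum>b\<in>UNIV. pmf (bernoulli_pmf p) b *\<^sub>R measure_pmf.expectation
        (if b then map_pmf (\<lambda>e. if e then v else -v) (bernoulli_pmf (1/2)) else return_pmf 0) f)"
    unfolding spike_pmf_def by (rule pmf_expectation_bind) auto
  then show ?thesis
    using assms by (simp add: UNIV_bool)
qed

lemma pmf_spike_pmf:
  assumes "0 \<le> p" "p \<le> 1" "v \<noteq> 0"
  shows "pmf (spike_pmf p v) x = (if x = v \<or> x = -v then p / 2 else if x = 0 then 1 - p else 0)"
  using expectation_spike_pmf[OF assms(1,2), of v "indicator {x}"] assms
  by (auto simp: measure_pmf_single[symmetric] indicator_def)

lemma map_pmf_spike_pmf_scale: "map_pmf (\<lambda>x. k * x) (spike_pmf p v) = spike_pmf p (k * v)"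
  unfolding spike_pmf_def
  by (auto simp: map_bind_pmf map_pmf_comp intro!: bind_pmf_cong map_pmf_cong)

lemma map_pmf_spike_pmf_nonzero:
  assumes "v \<noteq> 0"
  shows "map_pmf (\<lambda>x. x \<noteq> 0) (spike_pmf p v) = bernoulli_pmf p"
proof -
  have "map_pmf (\<lambda>x. x \<noteq> 0) (spike_pmf p v) = bind_pmf (bernoulli_pmf p) return_pmf"
    unfolding spike_pmf_def using assms
    by (auto simp: map_bind_pmf map_pmf_comp intro!: bind_pmf_cong)
  then show ?thesis by (simp add: bind_return_pmf')
qed

section \<open>Finitely supported noise distributions\<close>

definition borel_of_pmf :: "real pmf \<Rightarrow> real measure" where
  "borel_of_pmf \<xi> = distr (measure_pmf \<xi>) borel (\<lambda>x. x)"

lemma sets_borel_of_pmf [simp]: "sets (borel_of_pmf \<xi>) = sets borel"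
  by (simp add: borel_of_pmf_def)

lemma prob_space_borel_of_pmf: "prob_space (borel_of_pmf \<xi>)"
  unfolding borel_of_pmf_def by (rule prob_space.prob_space_distr) (auto simp: measure_pmf.prob_space_axioms)

lemma borel_of_pmf_in_noise_class:
  assumes fin: "finite (set_pmf \<xi>)"
    and mean: "measure_pmf.expectation \<xi> (\<lambda>x. x) = 0"
    and var: "measure_pmf.expectation \<xi> (\<lambda>x. x\<^sup>2) = 1"
    and tail: "\<And>t. 2 \<le> t \<Longrightarrow> measure_pmf.prob \<xi> {x. \<bar>x\<bar> > t} \<le> (\<tau> / t) powr a"
  shows "borel_of_pmf \<xi> \<in> noise_class a \<tau>"
proof -
  have distr: "integrable (borel_of_pmf \<xi>) f \<and> integral\<^sup>L (borel_of_pmf \<xi>) f = measure_pmf.expectation \<xi> f"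
    if "f \<in> borel_measurable borel" for f :: "real \<Rightarrow> real"
    unfolding borel_of_pmf_def using that
    by (simp add: integrable_distr_eq integral_distr integrable_measure_pmf_finite[OF fin])
  have "measure (borel_of_pmf \<xi>) {x. \<bar>x\<bar> > t} = measure_pmf.prob \<xi> {x. \<bar>x\<bar> > t}" for t :: real
  proof -
    have "{x::real. \<bar>x\<bar> > t} \<in> sets borel" by measurable
    then show ?thesis unfolding borel_of_pmf_def by (subst measure_distr) auto
  qed
  with distr[of "\<lambda>x. x"] distr[of "\<lambda>x. x\<^sup>2"] show ?thesis
    unfolding noise_class_def using prob_space_borel_of_pmf mean var tail by auto
qed

lemma spike_pmf_in_noise_class:
  assumes p: "0 < p" "p \<le> 1" and v: "p * v\<^sup>2 = 1" "\<bar>v\<bar> \<le> 2"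
  shows "borel_of_pmf (spike_pmf p v) \<in> noise_class a \<tau>"
proof (rule borel_of_pmf_in_noise_class)
  show "measure_pmf.expectation (spike_pmf p v) (\<lambda>x. x) = 0"
    and "measure_pmf.expectation (spike_pmf p v) (\<lambda>x. x\<^sup>2) = 1"
    using p v by (simp_all add: expectation_spike_pmf)
  fix t :: real
  assume "2 \<le> t"
  have "measure_pmf.prob (spike_pmf p v) {x. \<bar>x\<bar> > t} =
      measure_pmf.expectation (spike_pmf p v) (indicator {x. \<bar>x\<bar> > t})"
    by simp
  also have "\<dots> = 0"
    by (subst expectation_spike_pmf) (use p v \<open>2 \<le> t\<close> in \<open>auto simp: indicator_def\<close>)
  finally have "measure_pmf.prob (spike_pmf p v) {x. \<bar>x\<bar> > t} = 0" .
  then show "measure_pmf.prob (spike_pmf p v) {x. \<bar>x\<bar> > t} \<le> (\<tau> / t) powr a"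
    by simp
qed (rule finite_set_pmf_spike_pmf)

lemma PiM_borel_of_pmf:
  assumes fin: "finite I"
  shows "PiM I (\<lambda>_. borel_of_pmf \<xi>) =
    distr (measure_pmf (Pi_pmf I dflt (\<lambda>_. \<xi>))) (PiM I (\<lambda>_. borel)) (\<lambda>f. restrict f I)"
proof (rule product_sigma_finite.PiM_eqI[symmetric], goal_cases)
  case 1
  interpret product_prob_space "\<lambda>_. borel_of_pmf \<xi>"
    by (intro product_prob_spaceI prob_space_borel_of_pmf)
  show ?case by unfold_locales
next
  case 2
  show ?case by (rule fin)
next
  case 3
  have "sets (PiM I (\<lambda>_. borel_of_pmf \<xi>)) = sets (PiM I (\<lambda>_. borel))"
    by (intro sets_PiM_cong) simp_all
  then show ?case by simp
next
  case (4 A)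
  have A: "\<And>i. i \<in> I \<Longrightarrow> A i \<in> sets borel" using 4 by simp
  then have "Pi\<^sub>E I A \<in> sets (PiM I (\<lambda>i. borel))"
    by (intro sets_PiM_I_finite fin) auto
  then have "emeasure (distr (measure_pmf (Pi_pmf I dflt (\<lambda>_. \<xi>))) (PiM I (\<lambda>i. borel))
      (\<lambda>x. restrict x I)) (Pi\<^sub>E I A) =
      emeasure (measure_pmf (Pi_pmf I dflt (\<lambda>_. \<xi>))) ((\<lambda>x. restrict x I) -` Pi\<^sub>E I A)"
    by (subst emeasure_distr) (auto simp: space_PiM)
  also have "\<dots> = emeasure (measure_pmf (Pi_pmf I dflt (\<lambda>_. \<xi>))) (PiE_dflt I dflt A)"
    by (intro emeasure_eq_AE AE_pmfI) (auto simp: PiE_dflt_def set_Pi_pmf fin)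
  also have "\<dots> = (\<Prod>i\<in>I. emeasure (measure_pmf \<xi>) (A i))"
    by (simp add: measure_pmf.emeasure_eq_measure measure_Pi_pmf_PiE_dflt fin prod_ennreal)
  also have "\<dots> = (\<Prod>i\<in>I. emeasure (borel_of_pmf \<xi>) (A i))"
    using A by (intro prod.cong refl) (simp add: borel_of_pmf_def emeasure_distr)
  finally show ?case .
qed

lemma measurable_loss_class_comp:
  assumes L: "L \<in> loss_class" and g: "g \<in> borel_measurable M" and nonneg: "\<And>x. 0 \<le> g x"
  shows "(\<lambda>x. L (g x)) \<in> borel_measurable M"
proof -
  have "mono (\<lambda>z. L (max z 0))"
    using L by (intro monoI mono_onD[of "{0..}" L]) (auto simp: loss_class_def)
  then have "(\<lambda>x. L (max (g x) 0)) \<in> borel_measurable M"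
    using g by (intro measurable_compose[OF g borel_measurable_mono])
  then show ?thesis
    using nonneg by (simp add: max_absorb1)
qed

lemma measurable_obs:
  "obs d \<theta> \<sigma> \<in> measurable (PiM {..<d} (\<lambda>_. borel)) (PiM {..<d} (\<lambda>_. borel))"
  unfolding obs_def by (intro measurable_restrict) measurable

definition obs_pmf :: "nat \<Rightarrow> (nat \<Rightarrow> real) \<Rightarrow> real \<Rightarrow> real pmf \<Rightarrow> (nat \<Rightarrow> real) pmf" where
  "obs_pmf d \<theta> \<sigma> \<xi> = map_pmf (obs d \<theta> \<sigma>) (Pi_pmf {..<d} 0 (\<lambda>_. \<xi>))"

lemma risk_borel_of_pmf:
  assumes L: "L \<in> loss_class" and T: "T \<in> estimators d" and k: "0 \<le> c / \<phi>"
  shows "risk L c d T (borel_of_pmf \<xi>) \<sigma> \<theta> \<phi> =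
    (\<integral>\<^sup>+ y. ennreal (L (c / \<phi> * \<bar>T y / \<sigma>\<^sup>2 - 1\<bar>)) \<partial>obs_pmf d \<theta> \<sigma> \<xi>)"
proof -
  have "(\<lambda>f. T (obs d \<theta> \<sigma> f)) \<in> borel_measurable (PiM {..<d} (\<lambda>_. borel))"
    using measurable_compose[OF measurable_obs] T by (simp add: estimators_def)
  then have "(\<lambda>f. c / \<phi> * \<bar>T (obs d \<theta> \<sigma> f) / \<sigma>\<^sup>2 - 1\<bar>) \<in> borel_measurable (PiM {..<d} (\<lambda>_. borel))"
    by measurable
  then have m: "(\<lambda>f. ennreal (L (c / \<phi> * \<bar>T (obs d \<theta> \<sigma> f) / \<sigma>\<^sup>2 - 1\<bar>)))
      \<in> borel_measurable (PiM {..<d} (\<lambda>_. borel))"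
    by (rule measurable_compose[OF measurable_loss_class_comp[OF L] measurable_ennreal])
      (intro mult_nonneg_nonneg[OF k] abs_ge_zero)
  have "obs d \<theta> \<sigma> (restrict f {..<d}) = obs d \<theta> \<sigma> f" for f
    unfolding obs_def by auto
  moreover have "risk L c d T (borel_of_pmf \<xi>) \<sigma> \<theta> \<phi> =
    (\<integral>\<^sup>+ f. ennreal (L (c / \<phi> * \<bar>T (obs d \<theta> \<sigma> (restrict f {..<d})) / \<sigma>\<^sup>2 - 1\<bar>))
       \<partial>measure_pmf (Pi_pmf {..<d} 0 (\<lambda>_. \<xi>)))"
    unfolding risk_def PiM_borel_of_pmf[OF finite_lessThan, where dflt = 0]
    by (rule nn_integral_distr) (use m in \<open>auto simp: space_PiM\<close>)
  ultimately show ?thesis by (simp add: obs_pmf_def)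
qed

lemma zero_in_Theta: "(\<lambda>_\<in>{..<d}. 0) \<in> Theta d s"
  by (simp add: Theta_def)

section \<open>Dense regime\<close>

definition spike_vector_pmf :: "nat \<Rightarrow> real \<Rightarrow> (nat \<Rightarrow> real) pmf" where
  "spike_vector_pmf d p = Pi_pmf {..<d} 0 (\<lambda>_. spike_pmf p 1)"

abbreviation support_card :: "nat \<Rightarrow> (nat \<Rightarrow> real) \<Rightarrow> nat" where
  "support_card d y \<equiv> card {i \<in> {..<d}. y i \<noteq> 0}"

lemma obs_pmf_spike_noise:
  assumes p: "0 < p"
  shows "obs_pmf d (\<lambda>_\<in>{..<d}. 0) (sqrt p) (spike_pmf p (1 / sqrt p)) =
    map_pmf (\<lambda>y. restrict y {..<d}) (spike_vector_pmf d p)"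
proof -
  have "spike_vector_pmf d p = Pi_pmf {..<d} 0 (\<lambda>_. map_pmf (\<lambda>x. sqrt p * x) (spike_pmf p (1 / sqrt p)))"
    unfolding spike_vector_pmf_def using p by (simp add: map_pmf_spike_pmf_scale)
  also have "\<dots> = map_pmf (\<lambda>h. (\<lambda>x. sqrt p * x) \<circ> h) (Pi_pmf {..<d} 0 (\<lambda>_. spike_pmf p (1 / sqrt p)))"
    by (rule Pi_pmf_map) auto
  finally show ?thesis
    unfolding obs_pmf_def obs_def by (auto simp: map_pmf_comp intro!: map_pmf_cong)
qed

lemma spike_noise_in_noise_class:
  assumes p: "1/4 \<le> p" "p \<le> 1"
  shows "borel_of_pmf (spike_pmf p (1 / sqrt p)) \<in> noise_class a \<tau>"
proof (rule spike_pmf_in_noise_class)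
  have "sqrt (1/4) \<le> sqrt p"
    using p by (intro real_sqrt_le_mono) auto
  then show "\<bar>1 / sqrt p\<bar> \<le> 2"
    using p by (simp add: real_sqrt_divide field_simps)
qed (use p in \<open>auto simp: power_divide\<close>)

lemma pmf_spike_vector_pmf_ratio:
  assumes u: "0 \<le> u" "u \<le> 1"
  shows "pmf (spike_vector_pmf d ((1 - u) / 2)) y =
    (1 - u) ^ support_card d y * (1 + u) ^ (d - support_card d y) * pmf (spike_vector_pmf d (1/2)) y"
proof -
  have "pmf (spike_pmf ((1 - u) / 2) 1) v = (if v = 0 then 1 + u else 1 - u) * pmf (spike_pmf (1/2) 1) v" for v
    using u by (simp add: pmf_spike_pmf field_simps)
  then have "pmf (spike_vector_pmf d ((1 - u) / 2)) y =
      (\<Prod>i\<in>{..<d}. if y i = 0 then 1 + u else 1 - u) * pmf (spike_vector_pmf d (1/2)) y"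
    unfolding spike_vector_pmf_def by (auto simp: pmf_Pi prod.distrib)
  also have "(\<Prod>i\<in>{..<d}. if y i = 0 then 1 + u else 1 - u) =
      (1 + u) ^ card {i \<in> {..<d}. y i = 0} * (1 - u) ^ support_card d y"
    by (simp add: prod.If_cases Int_def conj_commute)
  also have "card {i \<in> {..<d}. y i = 0} = d - support_card d y"
  proof -
    have "card {i \<in> {..<d}. y i = 0} + support_card d y =
        card ({i \<in> {..<d}. y i = 0} \<union> {i \<in> {..<d}. y i \<noteq> 0})"
      by (rule card_Un_disjoint[symmetric]) auto
    also have "{i \<in> {..<d}. y i = 0} \<union> {i \<in> {..<d}. y i \<noteq> 0} = {..<d}"
      by auto
    finally show ?thesis by simp
  qed
  finally show ?thesis by (simp add: mult_ac)
qed

lemma one_minus_one_plus_power_lower_bound: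
  fixes u :: real
  assumes u: "0 \<le> u" "u \<le> 1" and r: "real (N - M) * u \<le> 1"
  shows "(1 - real (min N M) * u\<^sup>2) * (1 - real (N - M) * u) \<le> (1 - u) ^ N * (1 + u) ^ M"
proof -
  have u2: "u\<^sup>2 \<le> 1" using u by (simp add: power_le_one)
  have "(1 - real (min N M) * u\<^sup>2) * (1 - real (N - M) * u) \<le> (1 - u\<^sup>2) ^ min N M * (1 - u) ^ (N - M)"
  proof (rule mult_mono)
    show "1 - real (min N M) * u\<^sup>2 \<le> (1 - u\<^sup>2) ^ min N M"
      using Bernoulli_inequality[of "- u\<^sup>2" "min N M"] u2 by simp
    show "1 - real (N - M) * u \<le> (1 - u) ^ (N - M)"
      using Bernoulli_inequality[of "- u" "N - M"] u by simp
  qed (use u2 r in auto)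
  also have "\<dots> = (1 - u) ^ N * (1 + u) ^ min N M"
  proof -
    have "N = min N M + (N - M)" by simp
    then have "(1 - u) ^ N = (1 - u) ^ min N M * (1 - u) ^ (N - M)"
      by (metis power_add)
    then show ?thesis
      by (simp add: power2_eq_square power_mult_distrib[symmetric] algebra_simps)
  qed
  also have "\<dots> \<le> (1 - u) ^ N * (1 + u) ^ M"
    using u by (intro mult_left_mono power_increasing) auto
  finally show ?thesis .
qed

lemma spike_vector_likelihood_ratio:
  assumes d: "1 \<le> d" and y: "2 * real (support_card d y) \<le> d + sqrt d"
  shows "3/8 * pmf (spike_vector_pmf d (1/2)) y \<le> pmf (spike_vector_pmf d (1/2 - 1 / (4 * sqrt d))) y"
proof -
  define u where "u = 1 / (2 * sqrt d)"
  define N where "N = support_card d y"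
  define M where "M = d - N"
  have sd: "1 \<le> sqrt d" using d by simp
  have "1 \<le> 2 * sqrt d" using sd by linarith
  then have u: "0 \<le> u" "u \<le> 1" by (auto simp: u_def divide_le_eq_1)
  have N: "N \<le> d"
    unfolding N_def by (rule order_trans[OF card_mono card_lessThan[THEN eq_imp_le]]) auto
  have "real (N - M) \<le> sqrt d"
  proof (cases "M \<le> N")
    case True
    then have "real (N - M) = 2 * real N - d"
      using N by (simp add: M_def of_nat_diff)
    then show ?thesis using y by (simp add: N_def)
  qed simp
  then have r: "real (N - M) * u \<le> 1/2"
    using u sd mult_right_mono[of "real (N - M)" "sqrt d" u] by (simp add: u_def)
  have "real (min N M) * u\<^sup>2 \<le> real d * u\<^sup>2"
    using N by (intro mult_right_mono) auto
  also have "\<dots> = 1/4"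
    using sd by (simp add: u_def power_divide power_mult_distrib)
  finally have "(3/4) * (1/2) \<le> (1 - real (min N M) * u\<^sup>2) * (1 - real (N - M) * u)"
    using r by (intro mult_mono) auto
  also have "\<dots> \<le> (1 - u) ^ N * (1 + u) ^ M"
    using r u by (intro one_minus_one_plus_power_lower_bound) auto
  finally have "3/8 * pmf (spike_vector_pmf d (1/2)) y \<le> (1 - u) ^ N * (1 + u) ^ M * pmf (spike_vector_pmf d (1/2)) y"
    by (intro mult_right_mono) auto
  also have "\<dots> = pmf (spike_vector_pmf d ((1 - u) / 2)) y"
    unfolding N_def M_def using u by (rule pmf_spike_vector_pmf_ratio[symmetric])
  also have "(1 - u) / 2 = 1/2 - 1 / (4 * sqrt d)"
    by (simp add: u_def field_simps)
  finally show ?thesis .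
qed

lemma map_pmf_support_card_spike_vector_pmf:
  assumes "0 \<le> p" "p \<le> 1"
  shows "map_pmf (\<lambda>y. support_card d y) (spike_vector_pmf d p) = binomial_pmf d p"
proof -
  have "binomial_pmf d p = map_pmf (\<lambda>f. card {i \<in> {..<d}. f i}) (Pi_pmf {..<d} False (\<lambda>_. bernoulli_pmf p))"
    by (rule binomial_pmf_altdef') (use assms in auto)
  also have "Pi_pmf {..<d} False (\<lambda>_. bernoulli_pmf p) =
      Pi_pmf {..<d} False (\<lambda>_. map_pmf (\<lambda>x. x \<noteq> 0) (spike_pmf p 1))"
    by (simp add: map_pmf_spike_pmf_nonzero)
  also have "\<dots> = map_pmf (\<lambda>h. (\<lambda>x. x \<noteq> 0) \<circ> h) (spike_vector_pmf d p)"
    unfolding spike_vector_pmf_def by (rule Pi_pmf_map) auto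
  finally show ?thesis by (simp add: map_pmf_comp)
qed

lemma prob_spike_vector_moderate_support:
  assumes d: "1 \<le> d"
  shows "1/3 \<le> measure_pmf.prob (spike_vector_pmf d (1/2)) {y. 2 * real (support_card d y) \<le> d + sqrt d}"
proof -
  let ?B = "binomial_pmf d (1/2)"
  have "measure_pmf.prob ?B {n. \<not> 2 * real n \<le> d + sqrt d} \<le>
      measure_pmf.prob ?B {n. real d * (1/2) + sqrt d / 2 \<le> real n}"
    by (intro measure_pmf.finite_measure_mono) auto
  also have "\<dots> \<le> exp (- 2 * (sqrt d / 2)\<^sup>2 / real d)"
    using d by (intro binomial_distribution.prob_ge) (auto simp: binomial_distribution_def)
  also have "\<dots> = exp (- 1 / 2)"
    using d by (simp add: power_divide)
  also have "\<dots> \<le> 2/3"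
  proof -
    have "3/2 \<le> exp (1/2 :: real)"
      using exp_ge_add_one_self[of "1/2"] by simp
    then show ?thesis by (simp add: exp_minus field_simps)
  qed
  finally have "1/3 \<le> measure_pmf.prob ?B {n. 2 * real n \<le> d + sqrt d}"
    using measure_pmf.prob_compl[of "{n. 2 * real n \<le> d + sqrt d}" ?B]
    by (simp add: Compl_eq_Diff_UNIV[symmetric] Collect_neg_eq)
  then show ?thesis
    by (simp flip: map_pmf_support_card_spike_vector_pmf)
qed

lemma dense_regime_lower_bound:
  assumes L: "L \<in> loss_class" and T: "T \<in> estimators d" and d: "1 \<le> d"
    and k: "0 \<le> c / \<phi>" and x0: "0 \<le> x0" "x0 \<le> c / \<phi> / (4 * sqrt d)"
    and S: "\<And>P \<sigma> \<theta>. P \<in> noise_class a \<tau> \<Longrightarrow> 0 < \<sigma> \<Longrightarrow> \<theta> \<in> Theta d s \<Longrightarrow> risk L c d T P \<sigma> \<theta> \<phi> \<le> S"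
  shows "ennreal (L x0 / 16) \<le> S"
proof -
  define p where "p = 1/2 - 1 / (4 * sqrt d)"
  define G where "G = {y. 2 * real (support_card d y) \<le> d + sqrt d}"
  define F where "F = (\<lambda>q y. ennreal (L (c / \<phi> * \<bar>T (restrict y {..<d}) / q - 1\<bar>)))"
  have Lx0: "0 \<le> L x0" using L x0 by (simp add: loss_class_def)
  have p: "1/4 \<le> p" "p < 1/2" using d by (auto simp: p_def field_simps)
  have risk: "(\<integral>\<^sup>+ y. F q y \<partial>spike_vector_pmf d q) \<le> S" if "1/4 \<le> q" "q \<le> 1" for q
  proof -
    have "(\<integral>\<^sup>+ y. F q y \<partial>spike_vector_pmf d q) =
        risk L c d T (borel_of_pmf (spike_pmf q (1 / sqrt q))) (sqrt q) (\<lambda>_\<in>{..<d}. 0) \<phi>"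
      using that by (simp add: F_def risk_borel_of_pmf[OF L T k] obs_pmf_spike_noise)
    also have "\<dots> \<le> S"
      using that by (intro S spike_noise_in_noise_class zero_in_Theta) auto
    finally show ?thesis .
  qed
  have "c / \<phi> * ((1/2 - p) / (2 * (1/2))) = c / \<phi> / (4 * sqrt d)"
    by (simp add: p_def)
  then have sep: "ennreal (L x0) \<le> F p y + F (1/2) y" for y
    unfolding F_def using p k x0 by (intro loss_class_separates_scales[OF L]) auto
  have "ennreal (3/8 * L x0 * (1/3) / 2) \<le> S"
  proof (rule two_point_lower_bound)
    show "ennreal (3/8 * L x0) \<le> ennreal (3/8) * F p y + ennreal (3/8) * F (1/2) y" for y
      using mult_left_mono[OF sep[of y], of "ennreal (3/8)"] Lx0
      by (simp add: distrib_left flip: ennreal_mult)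
    show "ennreal (1/3) \<le> emeasure (spike_vector_pmf d (1/2)) G"
      using prob_spike_vector_moderate_support[OF d]
      by (simp add: G_def measure_pmf.emeasure_eq_measure)
    show "(\<integral>\<^sup>+ y. ennreal (3/8) * F p y * indicator G y \<partial>spike_vector_pmf d (1/2)) \<le> S"
      using spike_vector_likelihood_ratio[OF d, folded p_def] p
      by (intro order_trans[OF nn_integral_indicator_le_by_density risk]) (auto simp: G_def)
    have "ennreal (3/8) * F (1/2) y * indicator G y \<le> 1 * F (1/2) y * 1" for y
      by (intro mult_mono) (auto simp: indicator_def ennreal_le_1)
    then show "(\<integral>\<^sup>+ y. ennreal (3/8) * F (1/2) y * indicator G y \<partial>spike_vector_pmf d (1/2)) \<le> S"
      by (intro order_trans[OF nn_integral_mono risk]) auto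
  qed (use Lx0 in auto)
  then show ?thesis by simp
qed

section \<open>Sparse regime\<close>

definition spike_sum_pmf :: "real \<Rightarrow> real \<Rightarrow> real pmf" where
  "spike_sum_pmf q H = do {e \<leftarrow> spike_pmf q H; map_pmf (\<lambda>z. e + z) (spike_pmf (1/2) 1)}"

lemma set_pmf_spike_sum_pmf:
  "set_pmf (spike_sum_pmf q H) \<subseteq> (\<lambda>(e, z). e + z) ` ({H, -H, 0} \<times> {1, -1, 0})"
  unfolding spike_sum_pmf_def
  by (force dest: subsetD[OF set_pmf_spike_pmf[of q H]] subsetD[OF set_pmf_spike_pmf[of "1/2" 1]])

lemma expectation_spike_sum_pmf:
  fixes g :: "real \<Rightarrow> real"
  assumes q: "0 \<le> q" "q \<le> 1"
  shows "measure_pmf.expectation (spike_sum_pmf q H) g =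
    q * ((g (H + 1) + g (H - 1) + g (- H + 1) + g (- H - 1)) / 4 + (g H + g (- H)) / 2) / 2
    + (1 - q) * ((g 1 + g (-1)) / 4 + g 0 / 2)"
proof -
  have "measure_pmf.expectation (spike_sum_pmf q H) g =
      measure_pmf.expectation (spike_pmf q H) (\<lambda>e. (g (e + 1) + g (e - 1)) / 4 + g e / 2)"
    unfolding spike_sum_pmf_def
    by (subst expectation_bind_pmf) (auto simp: finite_set_pmf_spike_pmf expectation_spike_pmf)
  also have "\<dots> = q * ((g (H + 1) + g (H - 1) + g (- H + 1) + g (- H - 1)) / 4 + (g H + g (- H)) / 2) / 2
    + (1 - q) * ((g 1 + g (-1)) / 4 + g 0 / 2)"
    unfolding expectation_spike_pmf[OF q] by (simp add: add_divide_distrib)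
  finally show ?thesis .
qed

lemma prob_spike_sum_pmf_le:
  assumes q: "0 \<le> q" "q \<le> 1" and B: "\<And>y. \<bar>y\<bar> \<le> 1 \<Longrightarrow> y \<notin> B"
  shows "measure_pmf.prob (spike_sum_pmf q H) B \<le> q"
proof -
  let ?g = "indicator B :: real \<Rightarrow> real"
  have "measure_pmf.prob (spike_sum_pmf q H) B = measure_pmf.expectation (spike_sum_pmf q H) ?g"
    by simp
  also have "\<dots> = q * ((?g (H + 1) + ?g (H - 1) + ?g (- H + 1) + ?g (- H - 1)) / 4 + (?g H + ?g (- H)) / 2) / 2"
    using B by (subst expectation_spike_sum_pmf[OF q]) (auto simp: indicator_def)
  also have "\<dots> \<le> q * ((1 + 1 + 1 + 1) / 4 + (1 + 1) / 2) / 2"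
    using q by (intro mult_left_mono divide_right_mono add_mono) (auto simp: indicator_def)
  finally show ?thesis by simp
qed

definition sparse_scale :: "real \<Rightarrow> real \<Rightarrow> real" where
  "sparse_scale q H = sqrt (1/2 + q * H\<^sup>2)"

definition sparse_noise_pmf :: "real \<Rightarrow> real \<Rightarrow> real pmf" where
  "sparse_noise_pmf q H = map_pmf (\<lambda>y. y / sparse_scale q H) (spike_sum_pmf q H)"

lemma sparse_scale_sq: "0 \<le> q \<Longrightarrow> (sparse_scale q H)\<^sup>2 = 1/2 + q * H\<^sup>2"
  unfolding sparse_scale_def by simp

lemma sparse_scale_gt_half:
  assumes "0 \<le> q"
  shows "1/2 < sparse_scale q H"
proof -
  have "sqrt (1/4) < sqrt (1/2 + q * H\<^sup>2)"
    using assms by (intro real_sqrt_less_mono) (simp add: add_pos_nonneg)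
  then show ?thesis by (simp add: sparse_scale_def real_sqrt_divide)
qed

lemma prob_sparse_noise_pmf_tail:
  assumes q: "0 \<le> q" "q \<le> 1" and t: "2 \<le> t"
  shows "measure_pmf.prob (sparse_noise_pmf q H) {x. t < \<bar>x\<bar>} \<le>
    (if t * sparse_scale q H < \<bar>H\<bar> + 1 then q else 0)"
proof -
  define \<sigma> where "\<sigma> = sparse_scale q H"
  have \<sigma>: "1/2 < \<sigma>" using sparse_scale_gt_half[OF q(1)] by (simp add: \<sigma>_def)
  have "(\<lambda>y. y / \<sigma>) -` {x. t < \<bar>x\<bar>} = {y. t * \<sigma> < \<bar>y\<bar>}"
    using \<sigma> by (auto simp: abs_div pos_less_divide_eq)
  then have "measure_pmf.prob (sparse_noise_pmf q H) {x. t < \<bar>x\<bar>} =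
      measure_pmf.prob (spike_sum_pmf q H) {y. t * \<sigma> < \<bar>y\<bar>}"
    unfolding sparse_noise_pmf_def \<sigma>_def[symmetric] by simp
  also have "\<dots> \<le> (if t * \<sigma> < \<bar>H\<bar> + 1 then q else 0)"
  proof (cases "t * \<sigma> < \<bar>H\<bar> + 1")
    case True
    have "2 * (1/2) < t * \<sigma>"
      using t \<sigma> by (intro mult_le_less_imp_less) auto
    then show ?thesis
      using True by (simp, intro prob_spike_sum_pmf_le q) auto
  next
    case False
    have "set_pmf (spike_sum_pmf q H) \<inter> {y. t * \<sigma> < \<bar>y\<bar>} = {}"
      using set_pmf_spike_sum_pmf[of q H] False by force
    then have "measure_pmf.prob (spike_sum_pmf q H) {y. t * \<sigma> < \<bar>y\<bar>} = 0"
      by (subst measure_pmf_zero_iff)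
    then show ?thesis
      using False by simp
  qed
  finally show ?thesis by (simp add: \<sigma>_def)
qed

lemma sparse_noise_in_noise_class:
  assumes q: "0 \<le> q" "q \<le> 1"
    and tail: "\<And>t. 2 \<le> t \<Longrightarrow> t * sparse_scale q H < \<bar>H\<bar> + 1 \<Longrightarrow> q \<le> (\<tau> / t) powr a"
  shows "borel_of_pmf (sparse_noise_pmf q H) \<in> noise_class a \<tau>"
proof (rule borel_of_pmf_in_noise_class)
  define \<sigma> where "\<sigma> = sparse_scale q H"
  have \<sigma>: "1/2 < \<sigma>" "\<sigma>\<^sup>2 = 1/2 + q * H\<^sup>2"
    using sparse_scale_gt_half[OF q(1)] sparse_scale_sq[OF q(1)] by (simp_all add: \<sigma>_def)
  show "finite (set_pmf (sparse_noise_pmf q H))"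
    unfolding sparse_noise_pmf_def
    by (simp, intro finite_imageI finite_subset[OF set_pmf_spike_sum_pmf]) auto
  show "measure_pmf.expectation (sparse_noise_pmf q H) (\<lambda>x. x) = 0"
    unfolding sparse_noise_pmf_def using q by (simp add: expectation_spike_sum_pmf field_simps)
  have "measure_pmf.expectation (sparse_noise_pmf q H) (\<lambda>x. x\<^sup>2) = (1/2 + q * H\<^sup>2) / \<sigma>\<^sup>2"
    unfolding sparse_noise_pmf_def \<sigma>_def[symmetric] using q \<sigma>(1)
    by (simp add: expectation_spike_sum_pmf power_divide power2_eq_square field_simps)
  also have "\<dots> = 1"
  proof -
    have "0 < \<sigma>\<^sup>2" using \<sigma>(1) by simp
    then show ?thesis unfolding \<sigma>(2) by simp
  qed
  finally show "measure_pmf.expectation (sparse_noise_pmf q H) (\<lambda>x. x\<^sup>2) = 1" .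
  show "measure_pmf.prob (sparse_noise_pmf q H) {x. t < \<bar>x\<bar>} \<le> (\<tau> / t) powr a" if "2 \<le> t" for t
    using prob_sparse_noise_pmf_tail[OF q that, of H] tail[OF that]
    by (auto split: if_splits intro: order_trans)
qed

lemma obs_pmf_sparse_noise:
  assumes q: "0 \<le> q"
  shows "obs_pmf d (\<lambda>_\<in>{..<d}. 0) (sparse_scale q H) (sparse_noise_pmf q H) =
    do {\<theta> \<leftarrow> Pi_pmf {..<d} undefined (\<lambda>_. spike_pmf q H);
        obs_pmf d \<theta> (sqrt (1/2)) (spike_pmf (1/2) (sqrt 2))}"
proof -
  define \<sigma> where "\<sigma> = sparse_scale q H"
  have "0 < \<sigma>" using sparse_scale_gt_half[OF q, of H] unfolding \<sigma>_def by linarith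
  have "Pi_pmf {..<d} 0 (\<lambda>_. sparse_noise_pmf q H) =
      map_pmf (\<lambda>h. (\<lambda>y. y / \<sigma>) \<circ> h) (Pi_pmf {..<d} 0 (\<lambda>_. spike_sum_pmf q H))"
    unfolding sparse_noise_pmf_def \<sigma>_def by (rule Pi_pmf_map) auto
  moreover have "obs d (\<lambda>_\<in>{..<d}. 0) \<sigma> ((\<lambda>y. y / \<sigma>) \<circ> h) = restrict h {..<d}" for h
    unfolding obs_def using \<open>0 < \<sigma>\<close> by auto
  ultimately have noise: "obs_pmf d (\<lambda>_\<in>{..<d}. 0) \<sigma> (sparse_noise_pmf q H) =
      map_pmf (\<lambda>h. restrict h {..<d}) (Pi_pmf {..<d} 0 (\<lambda>_. spike_sum_pmf q H))"
    unfolding obs_pmf_def by (simp add: map_pmf_comp)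
  have mixture: "Pi_pmf {..<d} 0 (\<lambda>_. spike_sum_pmf q H) =
      do {\<theta> \<leftarrow> Pi_pmf {..<d} undefined (\<lambda>_. spike_pmf q H);
          Pi_pmf {..<d} 0 (\<lambda>i. map_pmf (\<lambda>z. \<theta> i + z) (spike_pmf (1/2) 1))}"
    unfolding spike_sum_pmf_def by (rule Pi_pmf_bind) auto
  have shift: "Pi_pmf {..<d} 0 (\<lambda>i. map_pmf (\<lambda>z. \<theta> i + z) (spike_pmf (1/2) 1)) =
      map_pmf (\<lambda>f i. if i \<in> {..<d} then \<theta> i + sqrt (1/2) * f i else 0)
        (Pi_pmf {..<d} 0 (\<lambda>_. spike_pmf (1/2) (sqrt 2)))" for \<theta>
  proof -
    have "spike_pmf (1/2) 1 = map_pmf (\<lambda>x. sqrt (1/2) * x) (spike_pmf (1/2) (sqrt 2))"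
      by (simp add: map_pmf_spike_pmf_scale real_sqrt_mult[symmetric])
    then show ?thesis
      by (simp add: map_pmf_comp Pi_pmf_map_dependent[where d' = 0])
  qed
  have "restrict (\<lambda>i. if i \<in> {..<d} then \<theta> i + sqrt (1/2) * f i else 0) {..<d} =
      obs d \<theta> (sqrt (1/2)) f" for \<theta> f
    unfolding obs_def by auto
  then show ?thesis
    unfolding \<sigma>_def[symmetric] noise mixture shift
    by (simp add: obs_pmf_def map_bind_pmf map_pmf_comp)
qed

lemma set_pmf_Pi_pmf_in_Theta:
  assumes "\<theta> \<in> set_pmf (Pi_pmf {..<d} undefined D)" "support_card d \<theta> \<le> s"
  shows "\<theta> \<in> Theta d s"
  using assms by (auto simp: Theta_def set_Pi_pmf PiE_dflt_def extensional_def)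

lemma prob_support_card_spike_vector_le:
  assumes q: "0 \<le> q" "q \<le> 1" and H: "H \<noteq> 0" and s: "real d * q \<le> real s / 2"
  shows "1/2 \<le> measure_pmf.prob (Pi_pmf {..<d} dflt (\<lambda>_. spike_pmf q H)) {\<theta>. support_card d \<theta> \<le> s}"
proof -
  define M where "M = Pi_pmf {..<d} dflt (\<lambda>_. spike_pmf q H)"
  define N where "N = (\<lambda>\<theta>::nat \<Rightarrow> real. \<Sum>i\<in>{..<d}. if \<theta> i \<noteq> 0 then 1 else 0 :: real)"
  have N: "N \<theta> = real (support_card d \<theta>)" for \<theta>
    unfolding N_def by (simp add: sum.If_cases Int_def conj_commute)
  have "measure_pmf.prob M {\<theta> \<in> space M. real s + 1 \<le> N \<theta>} \<le> measure_pmf.expectation M N / (real s + 1)"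
    unfolding M_def N_def
    by (intro integral_Markov_inequality_measure[where A = UNIV] integrable_sum_Pi_pmf)
      (auto intro: integrable_measure_pmf_finite finite_set_pmf_spike_pmf intro!: AE_I2 sum_nonneg)
  also have "measure_pmf.expectation M N = real d * q"
    unfolding M_def N_def using q H
    by (subst expectation_sum_Pi_pmf) (auto intro: integrable_measure_pmf_finite finite_set_pmf_spike_pmf
        simp: expectation_spike_pmf)
  also have "real d * q / (real s + 1) \<le> 1/2"
    using s by (simp add: field_simps)
  finally have "measure_pmf.prob M {\<theta> \<in> space M. real s + 1 \<le> N \<theta>} \<le> 1/2" .
  moreover have "{\<theta>. support_card d \<theta> \<le> s} = space M - {\<theta> \<in> space M. real s + 1 \<le> N \<theta>}"
    by (auto simp: N)
  ultimately show ?thesis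
    using measure_pmf.prob_compl[of "{\<theta> \<in> space M. real s + 1 \<le> N \<theta>}" M] by (simp add: M_def)
qed

lemma spike_mixture_lower_bound:
  assumes L: "L \<in> loss_class" and T: "T \<in> estimators d" and k: "0 \<le> c / \<phi>" and x0: "0 \<le> x0"
    and q: "0 < q" "q \<le> 1" and H: "0 < H" and count: "real d * q \<le> real s / 2"
    and tail: "\<And>t. 2 \<le> t \<Longrightarrow> t * sparse_scale q H < H + 1 \<Longrightarrow> q \<le> (\<tau> / t) powr a"
    and gap: "x0 \<le> c / \<phi> * (q * H\<^sup>2 / (2 * (1/2 + q * H\<^sup>2)))"
    and S: "\<And>P \<sigma> \<theta>. P \<in> noise_class a \<tau> \<Longrightarrow> 0 < \<sigma> \<Longrightarrow> \<theta> \<in> Theta d s \<Longrightarrow> risk L c d T P \<sigma> \<theta> \<phi> \<le> S"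
  shows "ennreal (L x0 / 4) \<le> S"
proof -
  define \<sigma> where "\<sigma> = sparse_scale q H"
  define M where "M = Pi_pmf {..<d} undefined (\<lambda>_. spike_pmf q H)"
  define K where "K = {\<theta>. support_card d \<theta> \<le> s}"
  define Y where "Y = (\<lambda>\<theta>. obs_pmf d \<theta> (sqrt (1/2)) (spike_pmf (1/2) (sqrt 2)))"
  define F where "F = (\<lambda>\<sigma>' \<theta>. \<integral>\<^sup>+ y. ennreal (L (c / \<phi> * \<bar>T y / \<sigma>'\<^sup>2 - 1\<bar>)) \<partial>Y \<theta>)"
  have \<sigma>: "0 < \<sigma>" "\<sigma>\<^sup>2 = 1/2 + q * H\<^sup>2"
    using sparse_scale_gt_half[of q H] sparse_scale_sq[of q H] q by (simp_all add: \<sigma>_def)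
  have "(\<integral>\<^sup>+ \<theta>. F \<sigma> \<theta> \<partial>M) = risk L c d T (borel_of_pmf (sparse_noise_pmf q H)) \<sigma> (\<lambda>_\<in>{..<d}. 0) \<phi>"
    using q by (simp add: F_def M_def Y_def \<sigma>_def risk_borel_of_pmf[OF L T k] obs_pmf_sparse_noise)
  also have "\<dots> \<le> S"
    using q H tail \<sigma>(1) by (intro S sparse_noise_in_noise_class zero_in_Theta) (auto simp: \<sigma>_def)
  finally have null_risk: "(\<integral>\<^sup>+ \<theta>. F \<sigma> \<theta> \<partial>M) \<le> S" .
  have "sqrt 2 \<le> (2::real)" by (subst real_sqrt_le_iff') auto
  then have sparse_risk: "F (sqrt (1/2)) \<theta> \<le> S" if "\<theta> \<in> set_pmf M" "\<theta> \<in> K" for \<theta>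
    using S[OF spike_pmf_in_noise_class _ set_pmf_Pi_pmf_in_Theta, of "1/2" "sqrt 2" "sqrt (1/2)" \<theta>] that
    by (auto simp: F_def Y_def M_def K_def risk_borel_of_pmf[OF L T k])
  have "ennreal (L x0 * (1/2) / 2) \<le> S"
  proof (rule two_point_lower_bound)
    fix \<theta>
    have "ennreal (L x0) = (\<integral>\<^sup>+ y. ennreal (L x0) \<partial>Y \<theta>)"
      by simp
    also have "\<dots> \<le> (\<integral>\<^sup>+ y. ennreal (L (c / \<phi> * \<bar>T y / \<sigma>\<^sup>2 - 1\<bar>))
        + ennreal (L (c / \<phi> * \<bar>T y / (sqrt (1/2))\<^sup>2 - 1\<bar>)) \<partial>Y \<theta>)"
      using loss_class_separates_scales[OF L, of "(sqrt (1/2))\<^sup>2" "\<sigma>\<^sup>2" "c / \<phi>" x0] q H k x0 gap \<sigma>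
      by (intro nn_integral_mono) (simp add: add.commute)
    also have "\<dots> = F \<sigma> \<theta> + F (sqrt (1/2)) \<theta>"
      unfolding F_def by (rule nn_integral_add) auto
    finally show "ennreal (L x0) \<le> F \<sigma> \<theta> + F (sqrt (1/2)) \<theta>" .
  next
    have "1/2 \<le> measure_pmf.prob M K"
      unfolding M_def K_def by (rule prob_support_card_spike_vector_le) (use q H count in auto)
    then show "ennreal (1/2) \<le> emeasure M K"
      by (subst measure_pmf.emeasure_eq_measure) (rule ennreal_leI)
    show "(\<integral>\<^sup>+ \<theta>. F \<sigma> \<theta> * indicator K \<theta> \<partial>M) \<le> S"
      by (rule order_trans[OF nn_integral_mono null_risk]) (simp add: indicator_def)
    show "(\<integral>\<^sup>+ \<theta>. F (sqrt (1/2)) \<theta> * indicator K \<theta> \<partial>M) \<le> S"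
      using sparse_risk by (rule nn_integral_indicator_le_by_bound)
  qed (use L x0 in \<open>auto simp: loss_class_def\<close>)
  then show ?thesis by simp
qed

lemma sparse_spike_tail_bound:
  assumes a: "0 < a" and q: "0 < q" and \<kappa>: "0 < \<kappa>" "\<kappa> \<le> 2/5" "\<kappa> \<le> \<tau> / 7"
    and H: "H = \<kappa> / q powr (1 / a)"
    and t: "2 \<le> t" "t * sparse_scale q H < H + 1"
  shows "q \<le> (\<tau> / t) powr a"
proof -
  define w where "w = q powr (1 / a)"
  define \<sigma> where "\<sigma> = sparse_scale q H"
  have w: "0 < w" "w powr a = q"
    using a q by (simp_all add: w_def powr_powr)
  have Hw: "H = \<kappa> / w"
    by (simp add: H w_def)
  have "0 < H"
    using \<kappa> w by (simp add: Hw)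
  have \<sigma>: "1/2 < \<sigma>" "1/2 \<le> \<sigma>\<^sup>2"
    using sparse_scale_gt_half[of q H] sparse_scale_sq[of q H] q by (simp_all add: \<sigma>_def)
  have "4 * (1/2) \<le> t\<^sup>2 * \<sigma>\<^sup>2"
    using t(1) \<sigma>(2) by (intro mult_mono power_mono[of 2 t 2, simplified]) auto
  also have "t\<^sup>2 * \<sigma>\<^sup>2 < (H + 1)\<^sup>2"
    using t \<sigma>(1) unfolding \<sigma>_def power_mult_distrib[symmetric] by (intro power_strict_mono) auto
  finally have "(7/5)\<^sup>2 < (H + 1)\<^sup>2"
    by (simp add: power2_eq_square)
  then have "7/5 < H + 1"
    by (rule power2_less_imp_less) (use \<open>0 < H\<close> in simp)
  moreover have "t * (1/2) \<le> t * \<sigma>"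
    using t(1) \<sigma>(1) by (intro mult_left_mono) auto
  ultimately have "t * (1/2) < 7/2 * H"
    using t(2) unfolding \<sigma>_def by linarith
  then have "t < 7 * H"
    by simp
  also have "7 * H \<le> \<tau> / w"
    using \<kappa> w by (simp add: Hw field_simps)
  finally have "w < \<tau> / t"
    using t w by (simp add: field_simps)
  then have "w powr a \<le> (\<tau> / t) powr a"
    using w a by (intro powr_mono2) auto
  then show ?thesis using w by simp
qed

lemma sparse_spike_signal_strength:
  fixes a \<kappa> :: real and s d :: nat
  assumes a: "2 \<le> a" and sd: "1 \<le> s" "s \<le> d" and \<kappa>: "0 < \<kappa>" "\<kappa> \<le> 1"
  defines "q \<equiv> real s / (2 * real d)"
  defines "H \<equiv> \<kappa> / q powr (1 / a)"
  shows "\<kappa>\<^sup>2 * (real s / real d) powr (1 - 2 / a) / 2 \<le> q * H\<^sup>2" and "q * H\<^sup>2 \<le> 1"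
proof -
  have q: "0 < q" "q \<le> 1/2"
    using sd by (auto simp: q_def field_simps)
  have \<beta>: "0 \<le> 1 - 2 / a" "1 - 2 / a \<le> 1"
    using a by (auto simp: field_simps)
  have "(q powr (1 / a))\<^sup>2 = q powr (2 / a)"
    by (simp add: power2_eq_square flip: powr_add)
  then have qH: "q * H\<^sup>2 = \<kappa>\<^sup>2 * q powr (1 - 2 / a)"
    using q by (simp add: H_def power_divide powr_diff)
  have "(real s / real d) powr (1 - 2 / a) * (1/2) powr 1 \<le> (real s / real d) powr (1 - 2 / a) * (1/2) powr (1 - 2 / a)"
    using \<beta> by (intro mult_left_mono powr_mono') auto
  also have "\<dots> = q powr (1 - 2 / a)"
    using sd by (simp add: q_def powr_mult[symmetric] field_simps)
  finally have "\<kappa>\<^sup>2 * ((real s / real d) powr (1 - 2 / a) * (1/2) powr 1) \<le> \<kappa>\<^sup>2 * q powr (1 - 2 / a)"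
    by (rule mult_left_mono) simp
  then show "\<kappa>\<^sup>2 * (real s / real d) powr (1 - 2 / a) / 2 \<le> q * H\<^sup>2"
    unfolding qH by simp
  have "q powr (1 - 2 / a) \<le> 1"
    using q \<beta> by (intro powr_le1) auto
  moreover have "\<kappa>\<^sup>2 \<le> 1"
    using \<kappa> by (simp add: power_le_one)
  ultimately show "q * H\<^sup>2 \<le> 1"
    unfolding qH using \<kappa> by (simp add: mult_le_one)
qed

lemma sparse_regime_lower_bound:
  assumes L: "L \<in> loss_class" and T: "T \<in> estimators d" and a: "2 \<le> a" and sd: "1 \<le> s" "s \<le> d"
    and \<kappa>: "0 < \<kappa>" "\<kappa> \<le> 2/5" "\<kappa> \<le> \<tau> / 7"
    and \<phi>: "\<phi> = (real s / real d) powr (1 - 2 / a)" and x0: "0 \<le> x0" and c: "6 * x0 / \<kappa>\<^sup>2 \<le> c"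
    and S: "\<And>P \<sigma> \<theta>. P \<in> noise_class a \<tau> \<Longrightarrow> 0 < \<sigma> \<Longrightarrow> \<theta> \<in> Theta d s \<Longrightarrow> risk L c d T P \<sigma> \<theta> \<phi> \<le> S"
  shows "ennreal (L x0 / 4) \<le> S"
proof -
  define q where "q = real s / (2 * real d)"
  define H where "H = \<kappa> / q powr (1 / a)"
  have q: "0 < q" "q \<le> 1" "real d * q \<le> real s / 2"
    using sd by (auto simp: q_def field_simps)
  have H: "0 < H" using \<kappa> q by (simp add: H_def)
  have \<phi>0: "0 < \<phi>" using sd by (simp add: \<phi>)
  have "0 \<le> 6 * x0 / \<kappa>\<^sup>2" using x0 by simp
  then have k: "0 \<le> c / \<phi>" using c \<phi>0 by simp
  have "\<kappa> \<le> 1" using \<kappa> by simp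
  note strength = sparse_spike_signal_strength[OF a sd \<kappa>(1) this, folded q_def H_def]
  have "x0 \<le> c / \<phi> * (\<kappa>\<^sup>2 * \<phi> / 6)"
    using c \<kappa> \<phi>0 by (simp add: field_simps)
  also have "\<dots> \<le> c / \<phi> * (q * H\<^sup>2 / (2 * (1/2 + q * H\<^sup>2)))"
  proof (intro mult_left_mono)
    have "\<kappa>\<^sup>2 * \<phi> / 6 \<le> q * H\<^sup>2 / 3"
      using strength(1) \<kappa> by (simp add: \<phi>)
    also have "\<dots> \<le> q * H\<^sup>2 / (2 * (1/2 + q * H\<^sup>2))"
      using strength(2) q by (intro divide_left_mono) (auto intro: add_pos_nonneg)
    finally show "\<kappa>\<^sup>2 * \<phi> / 6 \<le> q * H\<^sup>2 / (2 * (1/2 + q * H\<^sup>2))" .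
  qed (rule k)
  finally show ?thesis
    using a \<kappa> q H by (intro spike_mixture_lower_bound[OF L T k x0 q(1,2) H q(3) _ _ S] sparse_spike_tail_bound)
      (auto simp: H_def)
qed

lemma minimax_risk_lower_bound:
  assumes L: "L \<in> loss_class" and a: "2 \<le> a" and sd: "1 \<le> s" "s \<le> d"
    and \<kappa>: "0 < \<kappa>" "\<kappa> \<le> 2/5" "\<kappa> \<le> \<tau> / 7"
    and x0: "0 \<le> x0" and c: "4 * x0 \<le> c" "6 * x0 / \<kappa>\<^sup>2 \<le> c"
  shows "ennreal (L x0 / 16) \<le> (INF T\<in>estimators d. SUP P\<in>noise_class a \<tau>. SUP \<sigma>\<in>{0<..}.
      SUP \<theta>\<in>Theta d s. risk L c d T P \<sigma> \<theta> (phi_pol a s d))"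
proof (rule INF_greatest)
  fix T
  assume T: "T \<in> estimators d"
  let ?S = "SUP P\<in>noise_class a \<tau>. SUP \<sigma>\<in>{0<..}. SUP \<theta>\<in>Theta d s. risk L c d T P \<sigma> \<theta> (phi_pol a s d)"
  have S: "risk L c d T P \<sigma> \<theta> (phi_pol a s d) \<le> ?S"
    if "P \<in> noise_class a \<tau>" "0 < \<sigma>" "\<theta> \<in> Theta d s" for P \<sigma> \<theta>
    using that by (intro SUP_upper2[of P] SUP_upper2[of \<sigma>] SUP_upper) auto
  show "ennreal (L x0 / 16) \<le> ?S"
  proof (cases "(real s / real d) powr (1 - 2 / a) \<le> 1 / sqrt d")
    case True
    then have "phi_pol a s d = 1 / sqrt d"
      by (simp add: phi_pol_def)
    then show ?thesis
      using sd c x0 by (intro dense_regime_lower_bound[OF L T _ _ x0 _ S]) auto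
  next
    case False
    then have "phi_pol a s d = (real s / real d) powr (1 - 2 / a)"
      by (simp add: phi_pol_def)
    then have "ennreal (L x0 / 4) \<le> ?S"
      by (intro sparse_regime_lower_bound[OF L T a sd \<kappa> _ x0 c(2) S])
    moreover have "L x0 / 16 \<le> L x0 / 4"
      using L x0 by (simp add: loss_class_def)
    ultimately show ?thesis
      using ennreal_leI order_trans by blast
  qed
qed

theorem theorem6:
  fixes \<tau> a :: real and L :: "real \<Rightarrow> real"
  assumes "\<tau> > 0" and "a \<ge> 2" and "L \<in> loss_class"
  shows "\<exists>c>0. \<exists>c'>0. \<forall>s d :: nat. 1 \<le> s \<and> s \<le> d \<longrightarrow>
    (INF T\<in>estimators d. SUP P\<in>noise_class a \<tau>. SUP \<sigma>\<in>{0<..}. SUP \<theta>\<in>Theta d s.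
        risk L c d T P \<sigma> \<theta> (phi_pol a s d)) \<ge> ennreal c'"
proof -
  obtain x0 where x0: "0 \<le> x0" "L x0 \<noteq> 0"
    using assms(3) by (auto simp: loss_class_def)
  then have "0 < x0" "0 < L x0"
    using assms(3) by (auto simp: loss_class_def order.strict_iff_order)
  define \<kappa> where "\<kappa> = min (2/5) (\<tau> / 7)"
  have \<kappa>: "0 < \<kappa>" "\<kappa> \<le> 2/5" "\<kappa> \<le> \<tau> / 7"
    using assms(1) by (auto simp: \<kappa>_def)
  define c where "c = 4 * x0 + 6 * x0 / \<kappa>\<^sup>2"
  have "0 < 6 * x0 / \<kappa>\<^sup>2"
    using \<open>0 < x0\<close> \<kappa> by simp
  then have c: "0 < c" "4 * x0 \<le> c" "6 * x0 / \<kappa>\<^sup>2 \<le> c"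
    using \<open>0 < x0\<close> by (auto simp: c_def)
  have "\<forall>s d :: nat. 1 \<le> s \<and> s \<le> d \<longrightarrow>
    (INF T\<in>estimators d. SUP P\<in>noise_class a \<tau>. SUP \<sigma>\<in>{0<..}. SUP \<theta>\<in>Theta d s.
        risk L c d T P \<sigma> \<theta> (phi_pol a s d)) \<ge> ennreal (L x0 / 16)"
    using minimax_risk_lower_bound[OF assms(3,2) _ _ \<kappa> x0(1) c(2,3)] by auto
  moreover have "0 < L x0 / 16"
    using \<open>0 < L x0\<close> by simp
  ultimately show ?thesis
    using c(1) by blast
qed

end
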